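(* Let $p\in(\frac12,1]$ and let $\theta=\frac{1+\sqrt{2p-1}}{2}$. There exists $\varepsilon_0=\varepsilon_0(p)>0$ such that the following holds for every fixed $0<\varepsilon<\varepsilon_0$. Let $q=q(n)\gg\frac{\log n}{n}$, and let $G=G_n$ be $n$-vertex graphs satisfying \[\left|e(G[U])-q\frac{|U|^2}{2}\right|\leq\frac{\varepsilon^2}{4}qn^2\quad\text{for all }U\subseteq V(G).\] Consider a fixed tripartition $V(G)=V_1\sqcup V_2\sqcup V_3$. Then for every $\mu\in\mathcal{M}_{1,p}(G)$, the following hold with probability $1-o(1)$ as $n\to\infty$: (P1) $e(\mathbf{G}_\mu[V_i])\geq pq\frac{|V_i|^2}{2}-\varepsilon qn^2$ for every $i\in[3]$; (P2) $e(\mathbf{G}_\mu[V_i,V_j])\geq pq|V_i||V_j|-\varepsilon qn^2$ for all $1\leq i<j\leq3$; (P3) for every $i\in[3]$ with $|V_i|\geq\varepsilon^{1/4}n$, $\mathbf{G}_\mu[V_i]$ contains a unique largest connected component $C_i$, of order at least $(\theta-\varepsilon^{1/4})|V_i|$; (P4) for all $1\leq i<j\leq3$ with $|V_i|,|V_j|\geq\varepsilon^{1/4}n$, there exists a path from $C_i$ to $C_j$ in $\mathbf{G}_\mu[V_i,V_j]$; (P5) there is a unique largest connected component $C$ in $\mathbf{G}_\mu$ such that $|C|\geq(\theta-3\varepsilon^{1/4})n$ and $C_i\subseteq C$ for each $i\in[3]$ with $|V_i|\geq\varepsilon^{1/4}n$.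
   Context: $G[U]$ is the induced subgraph on $U$, and for disjoint $X,Y$, $G[X,Y]$ is the bipartite subgraph with vertex set $X\cup Y$ and the edges of $G$ between $X$ and $Y$. A random graph model on $G$ is a probability measure $\mu$ on subsets of $E(G)$, and $\mathbf{G}_\mu$ is the random spanning subgraph with edge set distributed according to $\mu$. $\mu$ is $1$-independent if for all sets $A,B\subseteq E(G)$ whose edges span disjoint vertex sets, $E(\mathbf{G}_\mu)\cap A$ and $E(\mathbf{G}_\mu)\cap B$ are independent. $\mathcal{M}_{1,p}(G)$ is the set of $1$-independent measures on $G$ in which each edge is present with probability exactly $p$. *)

theory Defs
  imports "HOL-Probability.Probability" "HOL-Library.Landau_Symbols"
begin

definition edges_on :: "nat set \<Rightarrow> nat set set" where
  "edges_on S = {e. \<exists>u v. e = {u, v} \<and> u \<noteq> v \<and> u \<in> S \<and> v \<in> S}"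

definition e_ind :: "nat set set \<Rightarrow> nat set \<Rightarrow> nat" where
  "e_ind F U = card {e \<in> F. e \<subseteq> U}"

definition bip_edges :: "nat set set \<Rightarrow> nat set \<Rightarrow> nat set \<Rightarrow> nat set set" where
  "bip_edges F X Y = {e \<in> F. \<exists>x\<in>X. \<exists>y\<in>Y. e = {x, y}}"

definition e_bip :: "nat set set \<Rightarrow> nat set \<Rightarrow> nat set \<Rightarrow> nat" where
  "e_bip F X Y = card (bip_edges F X Y)"

definition reach :: "nat set set \<Rightarrow> nat set \<Rightarrow> nat \<Rightarrow> nat \<Rightarrow> bool" where
  "reach F U = (\<lambda>x y. x \<in> U \<and> y \<in> U \<and> {x, y} \<in> F)\<^sup>*\<^sup>*"

definition comp :: "nat set set \<Rightarrow> nat set \<Rightarrow> nat \<Rightarrow> nat set" where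
  "comp F U v = {w \<in> U. reach F U v w}"

definition components :: "nat set set \<Rightarrow> nat set \<Rightarrow> nat set set" where
  "components F U = comp F U ` U"

definition unique_largest_comp :: "nat set set \<Rightarrow> nat set \<Rightarrow> nat set \<Rightarrow> bool" where
  "unique_largest_comp F U C \<longleftrightarrow>
     C \<in> components F U \<and> (\<forall>D \<in> components F U. D \<noteq> C \<longrightarrow> card D < card C)"

definition one_indep :: "nat set set \<Rightarrow> nat set set pmf \<Rightarrow> bool" where
  "one_indep E \<mu> \<longleftrightarrow>
     (\<forall>A B. A \<subseteq> E \<longrightarrow> B \<subseteq> E \<longrightarrow> \<Union>A \<inter> \<Union>B = {} \<longrightarrow>
        (\<forall>\<S> \<T>. measure_pmf.prob \<mu> {X. X \<inter> A \<in> \<S> \<and> X \<inter> B \<in> \<T>} =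
                 measure_pmf.prob \<mu> {X. X \<inter> A \<in> \<S>} * measure_pmf.prob \<mu> {X. X \<inter> B \<in> \<T>}))"

definition M1p :: "nat set set \<Rightarrow> real \<Rightarrow> nat set set pmf set" where
  "M1p E p = {\<mu>. set_pmf \<mu> \<subseteq> Pow E \<and> one_indep E \<mu> \<and>
                  (\<forall>e \<in> E. measure_pmf.prob \<mu> {X. e \<in> X} = p)}"

end

theory Submission
  imports Defs
begin

(*
  Write delta = eps^(1/4). On the event that (P1) and (P2) hold, (P3)-(P5) follow deterministically
  from the quasirandomness of G. A part W of size m >= delta n spans at least p q m^2/2 - eps q n^2
  edges of G_mu, while splitting W into pieces that no edge of G_mu leaves keeps at most q/2 times the
  sum of the squared piece sizes, up to O(eps^2 q n^2). As p > 1/2, the components of G_mu[W] cannot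
  be grouped into three pieces of size at most m/2, so some component has l >= m/2 vertices, and then
  l^2 + (m - l)^2 >= (p - O(delta^2)) m^2 forces l >= (theta - delta) m. The same splitting argument in
  the bipartite graph between two parts joins their giant components, and the component of G_mu
  containing all of them misses at most 3 delta n vertices.
  (P1) and (P2) fail with probability O(1/(eps^2 q n)) = o(1) by Chebyshev's inequality: indicators of
  disjoint edges are uncorrelated by 1-independence, so the number of edges of G_mu inside a set F of
  edges of G has variance at most 2 n |F| <= 2 q n^3.
*)

section \<open>Reachability and components\<close>

lemma reach_refl: "reach F U x x"
  unfolding reach_def by simp

lemma reach_sym: "reach F U x y \<Longrightarrow> reach F U y x"
  unfolding reach_def
  by (rule sympD[OF symp_rtranclp]) (auto intro: sympI simp: insert_commute)

lemma reach_trans: "reach F U x y \<Longrightarrow> reach F U y z \<Longrightarrow> reach F U x z"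
  unfolding reach_def by (rule rtranclp_trans)

lemma reach_mono: "F \<subseteq> F' \<Longrightarrow> U \<subseteq> U' \<Longrightarrow> reach F U x y \<Longrightarrow> reach F' U' x y"
  unfolding reach_def by (erule rtranclp_mono[THEN predicate2D, rotated]) auto

lemma comp_subset: "comp X V v \<subseteq> V"
  unfolding comp_def by auto

lemma comp_self: "v \<in> V \<Longrightarrow> v \<in> comp X V v"
  unfolding comp_def by (simp add: reach_refl)

lemma comp_eq_if_reach: "reach X V v w \<Longrightarrow> comp X V v = comp X V w"
  unfolding comp_def using reach_trans reach_sym by blast

lemma comp_disjoint:
  assumes "comp X V v \<noteq> comp X V w"
  shows "comp X V v \<inter> comp X V w = {}"
proof (rule ccontr)
  assume "comp X V v \<inter> comp X V w \<noteq> {}"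
  then obtain z where "reach X V v z" "reach X V w z" unfolding comp_def by blast
  then have "reach X V v w" using reach_trans reach_sym by blast
  then show False using assms comp_eq_if_reach by blast
qed

lemma comp_subset_comp:
  assumes "V \<subseteq> V'" "reach X V' v w"
  shows "comp X V w \<subseteq> comp X V' v"
  using assms reach_trans reach_mono[OF order_refl assms(1)] unfolding comp_def by blast

lemma unique_largest_comp_if_majority:
  assumes "finite V" "v \<in> V" "card V < 2 * card (comp X V v)"
  shows "unique_largest_comp X V (comp X V v)"
  unfolding unique_largest_comp_def components_def
proof (intro conjI ballI impI)
  show "comp X V v \<in> comp X V ` V" using assms(2) by blast
  fix D assume "D \<in> comp X V ` V" "D \<noteq> comp X V v"
  then have "D \<subseteq> V - comp X V v" using comp_disjoint comp_subset by blast
  then have "card D \<le> card V - card (comp X V v)"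
    using assms(1) by (metis card_Diff_subset card_mono comp_subset finite_Diff finite_subset)
  then show "card D < card (comp X V v)" using assms(3) by linarith
qed

definition edge_closed :: "nat set set \<Rightarrow> nat set \<Rightarrow> nat set \<Rightarrow> bool" where
  "edge_closed X V S \<longleftrightarrow> S \<subseteq> V \<and> (\<forall>u w. u \<in> S \<longrightarrow> w \<in> V \<longrightarrow> {u, w} \<in> X \<longrightarrow> w \<in> S)"

lemma edge_closed_reach: "reach X V x y \<Longrightarrow> edge_closed X V S \<Longrightarrow> x \<in> S \<Longrightarrow> y \<in> S"
  unfolding reach_def by (induction rule: rtranclp_induct) (auto simp: edge_closed_def)

lemma edge_closed_comp: "edge_closed X V (comp X V v)"
  unfolding edge_closed_def comp_def using reach_trans[of X V v] by (auto simp: reach_def)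

lemma edge_closed_Un: "edge_closed X V S \<Longrightarrow> edge_closed X V T \<Longrightarrow> edge_closed X V (S \<union> T)"
  unfolding edge_closed_def by blast

lemma edge_closed_UN: "(\<And>i. i \<in> I \<Longrightarrow> edge_closed X V (S i)) \<Longrightarrow> edge_closed X V (\<Union>i\<in>I. S i)"
  unfolding edge_closed_def by blast

lemma edge_closed_restrict: "edge_closed X V S \<Longrightarrow> S \<subseteq> V' \<Longrightarrow> V' \<subseteq> V \<Longrightarrow> edge_closed X V' S"
  unfolding edge_closed_def by blast

lemma card_three_parts:
  assumes "finite V" "S \<subseteq> V" "T \<subseteq> V - S"
  shows "card S + card T + card (V - S - T) = card V"
proof -
  have "card (V - S) = card V - card S" "card (V - S - T) = card (V - S) - card T"
    using assms by (auto simp: card_Diff_subset finite_subset)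
  moreover have "card S \<le> card V" "card T \<le> card (V - S)"
    using assms by (auto intro: card_mono)
  ultimately show ?thesis by linarith
qed

text \<open>Take \<open>S\<close> a largest union of components with \<open>2 |S| \<le> |V|\<close>; adding the component \<open>T\<close> of any vertex
  outside \<open>S\<close> overshoots \<open>|V|/2\<close>, so the rest \<open>V - S - T\<close> is small as well.\<close>

lemma small_components_split:
  assumes "finite V" and small: "\<forall>v\<in>V. 2 * card (comp X V v) < card V"
  shows "\<exists>S T. edge_closed X V S \<and> edge_closed X (V - S) T \<and>
           2 * card S \<le> card V \<and> 2 * card T \<le> card V \<and> 2 * card (V - S - T) \<le> card V"
proof (cases "V = {}")
  case True
  then show ?thesis by (intro exI[of _ "{}"]) (simp add: edge_closed_def)
next
  case False
  let ?P = "\<lambda>S. edge_closed X V S \<and> 2 * card S \<le> card V"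
  have "?P {}" by (simp add: edge_closed_def)
  moreover have "\<forall>S. ?P S \<longrightarrow> card S < card V + 1" by simp
  ultimately obtain S where S: "?P S" and S_max: "\<And>S'. ?P S' \<Longrightarrow> card S' \<le> card S"
    using ex_has_greatest_nat[of ?P "{}" card "card V + 1"] by blast
  have SV: "S \<subseteq> V" using S by (simp add: edge_closed_def)
  have "card V > 0" using False assms(1) by (simp add: card_gt_0_iff)
  then have "card S < card V" using S by linarith
  then have "S \<noteq> V" by blast
  then obtain v where v: "v \<in> V" "v \<notin> S" using SV by blast
  define T where "T = comp X V v"
  have T_closed: "edge_closed X V T" unfolding T_def by (rule edge_closed_comp)
  have TS: "T \<inter> S = {}"
    using edge_closed_reach[OF _ S[THEN conjunct1]] reach_sym v(2) unfolding T_def comp_def by blast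
  have fin: "finite S" "finite T"
    using assms(1) SV comp_subset[of X V v] unfolding T_def by (auto intro: finite_subset)
  have "card T > 0" using comp_self[OF v(1)] fin(2) unfolding T_def by (auto simp: card_gt_0_iff)
  moreover have ST: "card (S \<union> T) = card S + card T"
    using TS fin by (simp add: card_Un_disjoint inf_commute)
  ultimately have "card V < 2 * card (S \<union> T)"
    using S_max[of "S \<union> T"] edge_closed_Un[OF S[THEN conjunct1] T_closed] by force
  moreover have "card S + card T + card (V - S - T) = card V"
    using card_three_parts[OF assms(1) SV] TS comp_subset[of X V v] unfolding T_def by blast
  moreover have "2 * card T < card V" using small v(1) unfolding T_def by blast
  moreover have "edge_closed X (V - S) T"
    using edge_closed_restrict[OF T_closed] TS comp_subset[of X V v] unfolding T_def by blast
  ultimately show ?thesis using S ST by (intro exI[of _ S] exI[of _ T]) linarith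
qed

section \<open>Edge counts and quasirandomness\<close>

lemma e_ind_mono: "X \<subseteq> E \<Longrightarrow> finite U \<Longrightarrow> e_ind X U \<le> e_ind E U"
  unfolding e_ind_def by (rule card_mono) (auto intro: finite_subset[of _ "Pow U"])

lemma e_bip_mono: "X \<subseteq> E \<Longrightarrow> finite A \<Longrightarrow> finite B \<Longrightarrow> e_bip X A B \<le> e_bip E A B"
  unfolding e_bip_def bip_edges_def
  by (rule card_mono) (auto intro: finite_subset[of _ "Pow (A \<union> B)"])

lemma e_ind_eq_card_Int: "X \<subseteq> E \<Longrightarrow> e_ind X U = card ({e \<in> E. e \<subseteq> U} \<inter> X)"
  unfolding e_ind_def by (rule arg_cong[of _ _ card]) blast

lemma e_bip_eq_card_Int: "X \<subseteq> E \<Longrightarrow> e_bip X A B = card (bip_edges E A B \<inter> X)"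
  unfolding e_bip_def bip_edges_def by (rule arg_cong[of _ _ card]) blast

lemma e_ind_le_closed_split:
  assumes "X \<subseteq> edges_on W" "finite V" "edge_closed X V S"
  shows "e_ind X V \<le> e_ind X S + e_ind X (V - S)"
proof -
  have "{e \<in> X. e \<subseteq> V} \<subseteq> {e \<in> X. e \<subseteq> S} \<union> {e \<in> X. e \<subseteq> V - S}"
  proof
    fix e assume e: "e \<in> {e \<in> X. e \<subseteq> V}"
    then obtain u w where "e = {u, w}" using assms(1) unfolding edges_on_def by blast
    then show "e \<in> {e \<in> X. e \<subseteq> S} \<union> {e \<in> X. e \<subseteq> V - S}"
      using e assms(3) unfolding edge_closed_def by (auto simp: insert_commute)
  qed
  moreover have "finite ({e \<in> X. e \<subseteq> S} \<union> {e \<in> X. e \<subseteq> V - S})"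
    using assms(2,3) unfolding edge_closed_def by (auto intro: finite_subset[of _ "Pow V"])
  ultimately show ?thesis
    unfolding e_ind_def by (meson card_mono card_Un_le order_trans)
qed

lemma e_bip_le_closed_split:
  assumes "finite A" "finite B" "edge_closed (bip_edges X A B) (A \<union> B) U"
  shows "e_bip X A B \<le> e_bip X (A \<inter> U) (B \<inter> U) + e_bip X (A - U) (B - U)"
proof -
  have "bip_edges X A B \<subseteq> bip_edges X (A \<inter> U) (B \<inter> U) \<union> bip_edges X (A - U) (B - U)"
  proof
    fix e assume e: "e \<in> bip_edges X A B"
    then obtain x y where xy: "x \<in> A" "y \<in> B" "e = {x, y}" unfolding bip_edges_def by blast
    then have "{x, y} \<in> bip_edges X A B" "{y, x} \<in> bip_edges X A B" using e by (auto simp: insert_commute)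
    then have "x \<in> U \<longleftrightarrow> y \<in> U" using assms(3) xy unfolding edge_closed_def by blast
    then show "e \<in> bip_edges X (A \<inter> U) (B \<inter> U) \<union> bip_edges X (A - U) (B - U)"
      using e xy unfolding bip_edges_def by blast
  qed
  moreover have "finite (bip_edges X (A \<inter> U) (B \<inter> U) \<union> bip_edges X (A - U) (B - U))"
    using assms(1,2) unfolding bip_edges_def by (auto intro: finite_subset[of _ "Pow (A \<union> B)"])
  ultimately show ?thesis
    unfolding e_bip_def by (meson card_mono card_Un_le order_trans)
qed

lemma e_ind_Un_disjoint:
  assumes "E \<subseteq> edges_on W" "A \<inter> B = {}" "finite A" "finite B"
  shows "e_ind E (A \<union> B) = e_ind E A + e_ind E B + e_bip E A B"
proof -
  have split: "{e \<in> E. e \<subseteq> A \<union> B} = {e \<in> E. e \<subseteq> A} \<union> {e \<in> E. e \<subseteq> B} \<union> bip_edges E A B"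
  proof (intro equalityI subsetI)
    fix e assume e: "e \<in> {e \<in> E. e \<subseteq> A \<union> B}"
    then obtain u w where "e = {u, w}" using assms(1) unfolding edges_on_def by blast
    then show "e \<in> {e \<in> E. e \<subseteq> A} \<union> {e \<in> E. e \<subseteq> B} \<union> bip_edges E A B"
      using e unfolding bip_edges_def by (auto simp: insert_commute)
  qed (auto simp: bip_edges_def)
  have disj: "{e \<in> E. e \<subseteq> A} \<inter> {e \<in> E. e \<subseteq> B} = {}"
    "({e \<in> E. e \<subseteq> A} \<union> {e \<in> E. e \<subseteq> B}) \<inter> bip_edges E A B = {}"
    using assms(1,2) unfolding bip_edges_def edges_on_def by auto
  have fin: "finite {e \<in> E. e \<subseteq> A}" "finite {e \<in> E. e \<subseteq> B}" "finite (bip_edges E A B)"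
    using assms(3,4) unfolding bip_edges_def
    by (auto intro: finite_subset[of _ "Pow A"] finite_subset[of _ "Pow B"] finite_subset[of _ "Pow (A \<union> B)"])
  show ?thesis
    unfolding e_ind_def e_bip_def split using disj fin by (simp add: card_Un_disjoint)
qed

definition quasirandom_on :: "nat set set \<Rightarrow> nat set \<Rightarrow> real \<Rightarrow> real \<Rightarrow> bool" where
  "quasirandom_on E S q \<eta> \<longleftrightarrow> (\<forall>U\<subseteq>S. \<bar>real (e_ind E U) - q * real (card U)^2 / 2\<bar> \<le> \<eta>)"

lemma quasirandom_on_subset: "quasirandom_on E S q \<eta> \<Longrightarrow> S' \<subseteq> S \<Longrightarrow> quasirandom_on E S' q \<eta>"
  unfolding quasirandom_on_def by blast

lemma quasirandom_on_nonneg: "quasirandom_on E S q \<eta> \<Longrightarrow> 0 \<le> \<eta>"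
  unfolding quasirandom_on_def by (metis abs_ge_zero empty_subsetI order_trans)

lemma quasirandom_on_e_ind:
  assumes "quasirandom_on E S q \<eta>" "U \<subseteq> S"
  shows "real (e_ind E U) \<le> q * real (card U)^2 / 2 + \<eta>" "q * real (card U)^2 / 2 - \<eta> \<le> real (e_ind E U)"
  using assms unfolding quasirandom_on_def abs_le_iff by (fastforce simp: algebra_simps)+

lemma quasirandom_on_e_bip:
  assumes "quasirandom_on E S q \<eta>" "E \<subseteq> edges_on W" "A \<subseteq> S" "B \<subseteq> S" "A \<inter> B = {}" "finite A" "finite B"
  shows "\<bar>real (e_bip E A B) - q * real (card A) * real (card B)\<bar> \<le> 3 * \<eta>"
proof -
  have "real (e_ind E (A \<union> B)) = real (e_ind E A) + real (e_ind E B) + real (e_bip E A B)"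
    using e_ind_Un_disjoint[OF assms(2,5,6,7)] by simp
  moreover have "q * real (card (A \<union> B))^2 / 2
      = q * real (card A)^2 / 2 + q * real (card B)^2 / 2 + q * real (card A) * real (card B)"
    using assms(5-7) by (simp add: card_Un_disjoint power2_eq_square algebra_simps)
  moreover have "A \<union> B \<subseteq> S" using assms(3,4) by blast
  ultimately show ?thesis
    using quasirandom_on_e_ind[OF assms(1)] assms(3,4) unfolding abs_le_iff by (smt (verit))
qed

lemma e_ind_le_of_quasirandom:
  assumes "X \<subseteq> E" "quasirandom_on E S q \<eta>" "finite S" "U \<subseteq> S"
  shows "real (e_ind X U) \<le> q * real (card U)^2 / 2 + \<eta>"
  using quasirandom_on_e_ind(1)[OF assms(2,4)] e_ind_mono[OF assms(1), of U] assms(3,4)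
  by (smt (verit) finite_subset of_nat_mono)

lemma e_bip_le_of_quasirandom:
  assumes "X \<subseteq> E" "E \<subseteq> edges_on W" "quasirandom_on E S q \<eta>"
    and "A \<subseteq> S" "B \<subseteq> S" "A \<inter> B = {}" "finite A" "finite B"
  shows "real (e_bip X A B) \<le> q * real (card A) * real (card B) + 3 * \<eta>"
  using quasirandom_on_e_bip[OF assms(3,2,4-8)] e_bip_mono[OF assms(1,7,8)]
  unfolding abs_le_iff by linarith

section \<open>Giant components of dense parts\<close>

lemma sum_squares_le_of_halves:
  fixes a b c m :: real
  assumes "0 \<le> a" "0 \<le> b" "0 \<le> c" "2 * a \<le> m" "2 * b \<le> m" "2 * c \<le> m" "a + b + c = m"
  shows "a^2 + b^2 + c^2 \<le> m^2 / 2"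
proof -
  have "a * a \<le> m / 2 * a" "b * b \<le> m / 2 * b" "c * c \<le> m / 2 * c"
    using mult_right_mono[of a "m / 2" a] mult_right_mono[of b "m / 2" b] mult_right_mono[of c "m / 2" c]
      assms by auto
  moreover have "m / 2 * a + m / 2 * b + m / 2 * c = m^2 / 2"
    using assms(7) by (simp add: power2_eq_square flip: distrib_left)
  ultimately show ?thesis by (simp add: power2_eq_square)
qed

text \<open>If all components of \<open>X[V]\<close> were smaller than \<open>|V|/2\<close>, they could be grouped into three
  edge-closed pieces of size at most \<open>|V|/2\<close>, which together span at most \<open>q |V|\<^sup>2/4 + 3\<eta>\<close> edges.\<close>

lemma half_component_of_dense:
  fixes p q \<eta> \<eta>' :: real
  assumes XE: "X \<subseteq> E" and E: "E \<subseteq> edges_on W" and qr: "quasirandom_on E V q \<eta>" and V: "finite V"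
    and dense: "p * q * real (card V)^2 / 2 - \<eta>' \<le> real (e_ind X V)"
    and err: "\<eta>' + 3 * \<eta> < (p - 1 / 2) * q * real (card V)^2 / 2" and q: "0 \<le> q"
  shows "\<exists>v\<in>V. card V \<le> 2 * card (comp X V v)"
proof (rule ccontr)
  assume "\<not> ?thesis"
  then obtain S T where closed: "edge_closed X V S" "edge_closed X (V - S) T"
    and small: "2 * card S \<le> card V" "2 * card T \<le> card V" "2 * card (V - S - T) \<le> card V"
    using small_components_split[OF V, of X] by (force simp: not_le)
  define m a b c where "m = real (card V)"
    "a = real (card S)" "b = real (card T)" "c = real (card (V - S - T))"
  have X: "X \<subseteq> edges_on W" using XE E by blast
  have ST: "S \<subseteq> V" "T \<subseteq> V - S" using closed unfolding edge_closed_def by auto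
  have "e_ind X V \<le> e_ind X S + e_ind X T + e_ind X (V - S - T)"
    using e_ind_le_closed_split[OF X V closed(1)] e_ind_le_closed_split[OF X _ closed(2)] V by fastforce
  moreover have "q * (a^2 + b^2 + c^2) / 2 = q * a^2 / 2 + q * b^2 / 2 + q * c^2 / 2"
    by (simp add: field_simps)
  moreover have "T \<subseteq> V" "V - S - T \<subseteq> V" using ST by auto
  ultimately have sparse: "real (e_ind X V) \<le> q * (a^2 + b^2 + c^2) / 2 + 3 * \<eta>"
    using e_ind_le_of_quasirandom[OF XE qr V ST(1)] e_ind_le_of_quasirandom[OF XE qr V \<open>T \<subseteq> V\<close>]
      e_ind_le_of_quasirandom[OF XE qr V \<open>V - S - T \<subseteq> V\<close>]
    unfolding m_a_b_c_def by linarith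
  have "a + b + c = m"
    using card_three_parts[OF V ST] unfolding m_a_b_c_def by (simp flip: of_nat_add)
  moreover have "2 * a \<le> m" "2 * b \<le> m" "2 * c \<le> m"
    using of_nat_mono[OF small(1)] of_nat_mono[OF small(2)] of_nat_mono[OF small(3)]
    unfolding m_a_b_c_def by simp_all
  ultimately have "a^2 + b^2 + c^2 \<le> m^2 / 2"
    by (intro sum_squares_le_of_halves) (auto simp: m_a_b_c_def)
  then have "q * (a^2 + b^2 + c^2) / 2 \<le> q * (m^2 / 2) / 2"
    using q by (intro divide_right_mono mult_left_mono) auto
  then have "p * q * m^2 / 2 - \<eta>' \<le> q * (m^2 / 2) / 2 + 3 * \<eta>"
    using dense sparse unfolding m_a_b_c_def by linarith
  moreover have "(p - 1 / 2) * q * m^2 / 2 = p * q * m^2 / 2 - q * (m^2 / 2) / 2"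
    by (simp add: field_simps)
  ultimately show False using err unfolding m_a_b_c_def by linarith
qed

text \<open>Splitting off a component \<open>L\<close> with \<open>l \<ge> m/2\<close> vertices leaves at most
  \<open>q (l\<^sup>2 + (m - l)\<^sup>2)/2 + 2\<eta>\<close> edges, and \<open>l\<^sup>2 + (m - l)\<^sup>2 = (m\<^sup>2 + (2l - m)\<^sup>2)/2\<close>;
  comparing with \<open>p q m\<^sup>2/2\<close> bounds \<open>2l - m\<close> from below.\<close>

lemma large_component_of_dense:
  fixes p q s \<delta> \<eta> \<eta>' :: real
  assumes XE: "X \<subseteq> E" and E: "E \<subseteq> edges_on W" and qr: "quasirandom_on E V q \<eta>" and V: "finite V"
    and half: "card V \<le> 2 * card (comp X V v)"
    and dense: "p * q * real (card V)^2 / 2 - \<eta>' \<le> real (e_ind X V)"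
    and err: "\<eta>' + 2 * \<eta> \<le> 2 * \<delta>^2 * q * real (card V)^2"
    and s: "s^2 = 2 * p - 1" "3 * \<delta> \<le> s" and \<delta>: "0 < \<delta>" and q: "0 < q"
  shows "((1 + s) / 2 - \<delta>) * real (card V) \<le> real (card (comp X V v))"
proof -
  define m l where "m = real (card V)" "l = real (card (comp X V v))"
  have X: "X \<subseteq> edges_on W" using XE E by blast
  have "real (card (V - comp X V v)) = m - l"
    using V comp_subset[of X V v] unfolding m_l_def
    by (simp add: card_Diff_subset finite_subset of_nat_diff card_mono)
  then have "real (e_ind X (V - comp X V v)) \<le> q * (m - l)^2 / 2 + \<eta>"
    using e_ind_le_of_quasirandom[OF XE qr V Diff_subset[of V "comp X V v"]] by simp
  moreover have "real (e_ind X (comp X V v)) \<le> q * l^2 / 2 + \<eta>"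
    using e_ind_le_of_quasirandom[OF XE qr V comp_subset[of X V v]] unfolding m_l_def .
  moreover have "e_ind X V \<le> e_ind X (comp X V v) + e_ind X (V - comp X V v)"
    by (rule e_ind_le_closed_split[OF X V edge_closed_comp])
  ultimately have "real (e_ind X V) \<le> q * l^2 / 2 + q * (m - l)^2 / 2 + 2 * \<eta>" by linarith
  define y where "y = 2 * l - m"
  have "q * l^2 / 2 + q * (m - l)^2 / 2 = q * (m^2 + y^2) / 4"
    unfolding y_def power2_eq_square by (simp add: field_simps)
  then have "p * q * m^2 / 2 - \<eta>' \<le> q * (m^2 + y^2) / 4 + 2 * \<eta>"
    using dense \<open>real (e_ind X V) \<le> _\<close> unfolding m_l_def by linarith
  moreover have "q * (p * m^2 / 2 - (m^2 + y^2) / 4) = p * q * m^2 / 2 - q * (m^2 + y^2) / 4"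
    by (simp add: algebra_simps)
  ultimately have "q * (p * m^2 / 2 - (m^2 + y^2) / 4) \<le> q * (2 * \<delta>^2 * m^2)"
    using err unfolding m_l_def by (simp add: mult.commute mult.left_commute)
  then have "p * m^2 / 2 - (m^2 + y^2) / 4 \<le> 2 * \<delta>^2 * m^2" using q by (rule mult_left_le_imp_le)
  then have "(2 * p - 1) * m^2 - y^2 \<le> 8 * \<delta>^2 * m^2" by (simp add: field_simps)
  then have "s^2 * m^2 - y^2 \<le> 8 * \<delta>^2 * m^2" unfolding s(1) .
  then have y_sq: "(s^2 - 8 * \<delta>^2) * m^2 \<le> y^2" by (simp add: left_diff_distrib)
  have "(s - 2 * \<delta>)^2 \<le> s^2 - 8 * \<delta>^2"
    using s(2) \<delta> mult_right_mono[OF s(2), of \<delta>] by (simp add: power2_eq_square algebra_simps)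
  then have "((s - 2 * \<delta>) * m)^2 \<le> (s^2 - 8 * \<delta>^2) * m^2"
    unfolding power_mult_distrib by (rule mult_right_mono) simp
  then have "((s - 2 * \<delta>) * m)^2 \<le> y^2" using y_sq by linarith
  moreover have "0 \<le> y" using half unfolding y_def m_l_def by simp
  ultimately have "(s - 2 * \<delta>) * m \<le> y" by (rule power2_le_imp_le)
  then show ?thesis unfolding y_def m_l_def by (simp add: algebra_simps)
qed

lemma giant_component_of_dense:
  fixes p q s \<delta> \<eta> \<eta>' :: real
  assumes XE: "X \<subseteq> E" and E: "E \<subseteq> edges_on W" and qr: "quasirandom_on E V q \<eta>"
    and V: "finite V" "V \<noteq> {}"
    and dense: "p * q * real (card V)^2 / 2 - \<eta>' \<le> real (e_ind X V)"
    and err: "\<eta>' + 3 * \<eta> \<le> 2 * \<delta>^2 * q * real (card V)^2"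
    and s: "s^2 = 2 * p - 1" "3 * \<delta> \<le> s" and \<delta>: "0 < \<delta>" and q: "0 < q"
  shows "\<exists>v\<in>V. unique_largest_comp X V (comp X V v) \<and>
           ((1 + s) / 2 - \<delta>) * real (card V) \<le> real (card (comp X V v))"
proof -
  define m where "m = real (card V)"
  have m: "0 < m" using V unfolding m_def by (simp add: card_gt_0_iff)
  have "(3 * \<delta>)^2 \<le> s^2" using s(2) \<delta> by (intro power_mono) auto
  then have "9 * \<delta>^2 \<le> s^2" by (simp add: power_mult_distrib)
  moreover have "0 < \<delta>^2" using \<delta> by simp
  ultimately have "2 * \<delta>^2 < s^2 / 4" by linarith
  then have "2 * \<delta>^2 * (q * m^2) < s^2 / 4 * (q * m^2)"
    using q m by (intro mult_strict_right_mono) auto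
  moreover have "p - 1 / 2 = s^2 / 2" using s(1) by simp
  then have "(p - 1 / 2) * q * m^2 / 2 = s^2 / 4 * (q * m^2)" by simp
  ultimately have "2 * \<delta>^2 * (q * m^2) < (p - 1 / 2) * q * m^2 / 2" by linarith
  moreover have "2 * \<delta>^2 * q * m^2 = 2 * \<delta>^2 * (q * m^2)" by (simp add: mult.assoc)
  ultimately have "\<eta>' + 3 * \<eta> < (p - 1 / 2) * q * real (card V)^2 / 2"
    using err unfolding m_def by linarith
  then obtain v where v: "v \<in> V" "card V \<le> 2 * card (comp X V v)"
    using half_component_of_dense[OF XE E qr V(1) dense] q by auto
  have "((1 + s) / 2 - \<delta>) * m \<le> real (card (comp X V v))"
    using large_component_of_dense[OF XE E qr V(1) v(2) dense _ s \<delta> q] err quasirandom_on_nonneg[OF qr]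
    unfolding m_def by linarith
  moreover have "m / 2 < ((1 + s) / 2 - \<delta>) * m" using m s(2) \<delta> by (simp add: algebra_simps)
  ultimately have "card V < 2 * card (comp X V v)" unfolding m_def by linarith
  then show ?thesis
    using \<open>((1 + s) / 2 - \<delta>) * m \<le> _\<close> unique_largest_comp_if_majority[OF V(1) v(1)] v(1)
    unfolding m_def by blast
qed

text \<open>Let \<open>U\<close> collect the vertices reachable from \<open>CA\<close>. Every bipartite edge lies inside \<open>U\<close> or
  outside it, so with \<open>\<alpha> = |A \<inter> U| \<ge> a/2\<close> and \<open>\<beta> = |B \<inter> U| \<le> b/2\<close> there are at most
  \<open>q (\<alpha>\<beta> + (a - \<alpha>)(b - \<beta>)) + 6\<eta> \<le> q a b/2 + 6\<eta>\<close> of them.\<close>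

lemma bip_path_between_majorities:
  fixes p q \<eta> \<eta>' :: real
  assumes XE: "X \<subseteq> E" and E: "E \<subseteq> edges_on W" and qr: "quasirandom_on E (A \<union> B) q \<eta>"
    and AB: "A \<inter> B = {}" "finite A" "finite B"
    and dense: "p * q * real (card A) * real (card B) - \<eta>' \<le> real (e_bip X A B)"
    and err: "\<eta>' + 6 * \<eta> < (p - 1 / 2) * q * real (card A) * real (card B)" and q: "0 \<le> q"
    and CA: "CA \<subseteq> A" "card A \<le> 2 * card CA" and CB: "CB \<subseteq> B" "card B \<le> 2 * card CB"
  shows "\<exists>u\<in>CA. \<exists>w\<in>CB. reach (bip_edges X A B) (A \<union> B) u w"
proof (rule ccontr)
  assume no_path: "\<not> ?thesis"
  define U where "U = (\<Union>u\<in>CA. comp (bip_edges X A B) (A \<union> B) u)"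
  have closed: "edge_closed (bip_edges X A B) (A \<union> B) U"
    unfolding U_def by (intro edge_closed_UN edge_closed_comp)
  define a b \<alpha> \<beta> where "a = real (card A)" "b = real (card B)"
    "\<alpha> = real (card (A \<inter> U))" "\<beta> = real (card (B \<inter> U))"
  have diff_cards: "real (card (A - U)) = a - \<alpha>" "real (card (B - U)) = b - \<beta>"
    using AB card_mono[of A "A \<inter> U"] card_mono[of B "B \<inter> U"] unfolding a_b_\<alpha>_\<beta>_def
    by (simp_all add: card_Diff_subset_Int of_nat_diff)
  have "real (e_bip X (A \<inter> U) (B \<inter> U)) \<le> q * \<alpha> * \<beta> + 3 * \<eta>"
    using e_bip_le_of_quasirandom[OF XE E qr, of "A \<inter> U" "B \<inter> U"] AB unfolding a_b_\<alpha>_\<beta>_def by auto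
  moreover have "real (e_bip X (A - U) (B - U)) \<le> q * (a - \<alpha>) * (b - \<beta>) + 3 * \<eta>"
    using e_bip_le_of_quasirandom[OF XE E qr, of "A - U" "B - U"] AB unfolding diff_cards by auto
  moreover have "real (e_bip X A B) \<le> real (e_bip X (A \<inter> U) (B \<inter> U)) + real (e_bip X (A - U) (B - U))"
    using e_bip_le_closed_split[OF AB(2,3) closed] by linarith
  ultimately have sparse: "real (e_bip X A B) \<le> q * \<alpha> * \<beta> + q * (a - \<alpha>) * (b - \<beta>) + 6 * \<eta>"
    by linarith
  have "CA \<subseteq> A \<inter> U" using CA(1) comp_self[of _ "A \<union> B" "bip_edges X A B"] unfolding U_def by blast
  then have "card CA \<le> card (A \<inter> U)" using AB(2) by (intro card_mono) auto
  then have "0 \<le> 2 * \<alpha> - a" using CA(2) unfolding a_b_\<alpha>_\<beta>_def by linarith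
  have "B \<inter> U \<inter> CB = {}" using no_path unfolding U_def comp_def by auto
  then have "card (B \<inter> U) + card CB \<le> card B"
    using AB(3) CB(1) by (metis card_Un_disjoint card_mono finite_Int finite_subset Int_lower1 Un_subset_iff)
  then have "2 * \<beta> - b \<le> 0" using CB(2) unfolding a_b_\<alpha>_\<beta>_def by linarith
  have "2 * (\<alpha> * \<beta> + (a - \<alpha>) * (b - \<beta>)) = a * b + (2 * \<alpha> - a) * (2 * \<beta> - b)"
    by (simp add: algebra_simps)
  moreover have "(2 * \<alpha> - a) * (2 * \<beta> - b) \<le> 0"
    using \<open>0 \<le> 2 * \<alpha> - a\<close> \<open>2 * \<beta> - b \<le> 0\<close> by (rule mult_nonneg_nonpos)
  ultimately have "q * (\<alpha> * \<beta> + (a - \<alpha>) * (b - \<beta>)) \<le> q * (a * b / 2)"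
    using q by (intro mult_left_mono) auto
  then have "p * q * a * b - \<eta>' \<le> q * (a * b / 2) + 6 * \<eta>"
    using dense sparse unfolding a_b_\<alpha>_\<beta>_def by (simp add: algebra_simps)
  moreover have "(p - 1 / 2) * q * a * b = p * q * a * b - q * (a * b / 2)"
    by (simp add: algebra_simps)
  ultimately show False using err unfolding a_b_\<alpha>_\<beta>_def by linarith
qed

section \<open>Tripartitions\<close>

definition tripartition :: "(nat \<Rightarrow> nat set) \<Rightarrow> nat set \<Rightarrow> bool" where
  "tripartition V S \<longleftrightarrow> V 1 \<union> V 2 \<union> V 3 = S \<and> V 1 \<inter> V 2 = {} \<and> V 1 \<inter> V 3 = {} \<and> V 2 \<inter> V 3 = {}"

lemma tripartition_subset: "tripartition V S \<Longrightarrow> i \<in> {1, 2, 3} \<Longrightarrow> V i \<subseteq> S"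
  unfolding tripartition_def by auto

lemma tripartition_disjoint: "tripartition V S \<Longrightarrow> i \<in> {1, 2, 3} \<Longrightarrow> j \<in> {1, 2, 3} \<Longrightarrow> i \<noteq> j \<Longrightarrow> V i \<inter> V j = {}"
  unfolding tripartition_def by auto

lemma tripartition_card_Int:
  assumes "tripartition V S" "finite S" "C \<subseteq> S"
  shows "card C = card (C \<inter> V 1) + card (C \<inter> V 2) + card (C \<inter> V 3)"
proof -
  have "C = (C \<inter> V 1) \<union> (C \<inter> V 2) \<union> (C \<inter> V 3)" using assms(1,3) unfolding tripartition_def by blast
  moreover have "finite (C \<inter> V i)" for i using assms(2,3) by (auto intro: finite_subset)
  ultimately show ?thesis
    using assms(1) unfolding tripartition_def
    by (metis card_Un_disjoint finite_Un Int_Un_distrib2 inf_assoc inf_bot_right inf_left_commute)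
qed

lemma reach_bip_edges: "reach (bip_edges X A B) (A \<union> B) u w \<Longrightarrow> A \<union> B \<subseteq> S \<Longrightarrow> reach X S u w"
  by (erule reach_mono[rotated 2]) (auto simp: bip_edges_def)

lemma linked_parts_in_one_comp:
  assumes part: "tripartition V S" and I: "I \<subseteq> {1, 2, 3}" "i0 \<in> I" "j \<in> I"
    and links: "\<And>i j. i \<in> I \<Longrightarrow> j \<in> I \<Longrightarrow> i < j \<Longrightarrow>
       \<exists>u\<in>comp X (V i) (v i). \<exists>w\<in>comp X (V j) (v j). reach (bip_edges X (V i) (V j)) (V i \<union> V j) u w"
  shows "comp X (V j) (v j) \<subseteq> comp X S (v i0)"
proof -
  have lift: "reach X S (v i) (v j)"
    if "i \<in> I" "j \<in> I" "x \<in> comp X (V i) (v i)" "y \<in> comp X (V j) (v j)"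
      "reach (bip_edges X (V i) (V j)) (V i \<union> V j) x y" for i j x y
  proof -
    have sub: "V i \<subseteq> S" "V j \<subseteq> S" using tripartition_subset[OF part] I(1) that(1,2) by auto
    have "reach X S (v i) x" "reach X S (v j) y"
      using that(3,4) reach_mono[OF order_refl sub(1)] reach_mono[OF order_refl sub(2)]
      unfolding comp_def by blast+
    moreover have "reach X S x y" using reach_bip_edges[OF that(5)] sub by blast
    ultimately show ?thesis using reach_sym reach_trans by blast
  qed
  have "reach X S (v i0) (v j)"
  proof (cases i0 j rule: linorder_cases)
    case less
    then show ?thesis using links[OF I(2,3) less] lift[OF I(2,3)] by blast
  next
    case equal
    then show ?thesis by (simp add: reach_refl)
  next
    case greater
    then show ?thesis using links[OF I(3,2) greater] lift[OF I(3,2)] reach_sym by blast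
  qed
  then show ?thesis by (rule comp_subset_comp[rotated]) (use tripartition_subset[OF part] I(1,3) in auto)
qed

lemma tripartition_card_sum:
  assumes "tripartition V S" "finite S"
  shows "card (V 1) + card (V 2) + card (V 3) = card S"
  using tripartition_card_Int[OF assms order_refl] tripartition_subset[OF assms(1)] by (simp add: Int_absorb1)

lemma tripartition_has_big_part:
  fixes \<delta> :: real
  assumes "tripartition V {..<n}" "0 < n" "3 * \<delta> < 1"
  shows "\<exists>i\<in>{1, 2, 3}. \<delta> * real n \<le> real (card (V i))"
proof (rule ccontr)
  assume "\<not> ?thesis"
  then have "real (card (V 1)) < \<delta> * real n" "real (card (V 2)) < \<delta> * real n"
    "real (card (V 3)) < \<delta> * real n"
    by auto
  moreover have "\<delta> * real n < real n / 3" using assms(2,3) by simp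
  ultimately show False using tripartition_card_sum[OF assms(1)] by simp
qed

lemma card_ge_of_big_parts:
  fixes \<theta> \<delta> :: real and V :: "nat \<Rightarrow> nat set" and S :: "nat set"
  defines "big i \<equiv> \<delta> * real (card S) \<le> real (card (V i))"
  assumes part: "tripartition V S" "finite S" and C: "C \<subseteq> S" and \<theta>: "\<theta> - \<delta> \<le> 1" and \<delta>: "0 \<le> \<delta>"
    and i0: "i0 \<in> {1, 2, 3}" "big i0"
    and parts: "\<And>i. i \<in> {1, 2, 3} \<Longrightarrow> big i \<Longrightarrow> (\<theta> - \<delta>) * real (card (V i)) \<le> real (card (C \<inter> V i))"
  shows "(\<theta> - 3 * \<delta>) * real (card S) \<le> real (card C)"
proof -
  \<comment> \<open>a part that is not big has fewer than \<open>\<delta> |S|\<close> vertices, and at most two parts are not big\<close>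
  define N d where "N = real (card S)" "d i = (if big i then 0 else \<delta> * N)" for i
  have per_part: "(\<theta> - \<delta>) * real (card (V i)) - d i \<le> real (card (C \<inter> V i))" if "i \<in> {1, 2, 3}" for i
  proof (cases "big i")
    case True
    then show ?thesis using parts[OF that True] unfolding N_d_def by simp
  next
    case False
    have "(\<theta> - \<delta>) * real (card (V i)) \<le> real (card (V i))"
      using \<theta> by (metis mult_le_cancel_right1 of_nat_0_le_iff mult_right_mono mult_1)
    then show ?thesis using False unfolding N_d_def big_def by simp
  qed
  have "d 1 + d 2 + d 3 \<le> 2 * (\<delta> * N)" using i0 \<delta> unfolding N_d_def by auto
  moreover have "card C = card (C \<inter> V 1) + card (C \<inter> V 2) + card (C \<inter> V 3)"
    by (rule tripartition_card_Int[OF part C])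
  moreover have "(\<theta> - \<delta>) * real (card (V 1)) + (\<theta> - \<delta>) * real (card (V 2)) + (\<theta> - \<delta>) * real (card (V 3))
      = (\<theta> - \<delta>) * N"
    using tripartition_card_sum[OF part] unfolding N_d_def by (simp flip: distrib_left of_nat_add)
  ultimately have "(\<theta> - \<delta>) * N - 2 * (\<delta> * N) \<le> real (card C)"
    using per_part[of 1] per_part[of 2] per_part[of 3] by simp
  then show ?thesis unfolding N_d_def by (simp add: algebra_simps)
qed

lemma giant_component_of_linked_parts:
  fixes \<theta> \<delta> :: real and V :: "nat \<Rightarrow> nat set" and n :: nat
  defines "big i \<equiv> \<delta> * real n \<le> real (card (V i))"
  assumes part: "tripartition V {..<n}" and n: "0 < n"
    and \<delta>: "0 < \<delta>" and \<theta>: "\<theta> - \<delta> \<le> 1" "1 / 2 < \<theta> - 3 * \<delta>"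
    and parts: "\<And>i. i \<in> {1, 2, 3} \<Longrightarrow> big i \<Longrightarrow>
       v i \<in> V i \<and> (\<theta> - \<delta>) * real (card (V i)) \<le> real (card (comp X (V i) (v i)))"
    and links: "\<And>i j. i \<in> {1, 2, 3} \<Longrightarrow> j \<in> {1, 2, 3} \<Longrightarrow> i < j \<Longrightarrow> big i \<Longrightarrow> big j \<Longrightarrow>
       \<exists>u\<in>comp X (V i) (v i). \<exists>w\<in>comp X (V j) (v j). reach (bip_edges X (V i) (V j)) (V i \<union> V j) u w"
  shows "\<exists>C. unique_largest_comp X {..<n} C \<and> (\<theta> - 3 * \<delta>) * real n \<le> real (card C) \<and>
           (\<forall>i\<in>{1, 2, 3}. big i \<longrightarrow> comp X (V i) (v i) \<subseteq> C)"
proof -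
  have "3 * \<delta> < 1" using \<theta> by linarith
  then obtain i0 where i0: "i0 \<in> {1, 2, 3}" "big i0"
    using tripartition_has_big_part[OF part n] unfolding big_def by blast
  define C where "C = comp X {..<n} (v i0)"
  have parts_in_C: "comp X (V j) (v j) \<subseteq> C" if "j \<in> {1, 2, 3}" "big j" for j
    unfolding C_def
    by (rule linked_parts_in_one_comp[OF part, where I = "{i \<in> {1, 2, 3}. big i}"])
      (use i0 that links in auto)
  have in_C: "(\<theta> - \<delta>) * real (card (V i)) \<le> real (card (C \<inter> V i))" if "i \<in> {1, 2, 3}" "big i" for i
  proof -
    have "comp X (V i) (v i) \<subseteq> C \<inter> V i" using parts_in_C[OF that] comp_subset by blast
    then have "card (comp X (V i) (v i)) \<le> card (C \<inter> V i)"
      using tripartition_subset[OF part that(1)] by (intro card_mono) (auto intro: finite_subset)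
    then show ?thesis using parts[OF that] by linarith
  qed
  have "(\<theta> - 3 * \<delta>) * real (card {..<n}) \<le> real (card C)"
  proof (rule card_ge_of_big_parts[OF part finite_lessThan _ \<theta>(1)])
    show "C \<subseteq> {..<n}" unfolding C_def by (rule comp_subset)
    show "i0 \<in> {1, 2, 3}" "\<delta> * real (card {..<n}) \<le> real (card (V i0))"
      using i0 unfolding big_def by simp_all
  qed (use \<delta> in_C in \<open>simp_all add: big_def\<close>)
  then have size: "(\<theta> - 3 * \<delta>) * real n \<le> real (card C)" by simp
  moreover have "real n / 2 < (\<theta> - 3 * \<delta>) * real n" using \<theta>(2) n by simp
  ultimately have "card {..<n} < 2 * card C" by simp
  then have "unique_largest_comp X {..<n} C"
    unfolding C_def using unique_largest_comp_if_majority tripartition_subset[OF part i0(1)] parts[OF i0]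
    by blast
  then show ?thesis using size parts_in_C by blast
qed

lemma error_powers_le:
  fixes \<delta> N M :: real
  assumes "0 < \<delta>" "\<delta> \<le> 1" "0 \<le> N" "\<delta>^2 * N \<le> M"
  shows "\<delta>^4 * N \<le> \<delta>^2 * M" "\<delta>^8 * N \<le> \<delta>^2 * M"
proof -
  show le4: "\<delta>^4 * N \<le> \<delta>^2 * M"
    using mult_left_mono[OF assms(4), of "\<delta>^2"] by (simp add: power_add[symmetric] mult.assoc[symmetric])
  have "\<delta>^4 * (\<delta>^4 * N) \<le> \<delta>^4 * N"
    using assms by (intro mult_left_le_one_le) (auto simp: power_le_one)
  then show "\<delta>^8 * N \<le> \<delta>^2 * M" using le4 by (simp add: power_add[symmetric] mult.assoc[symmetric])
qed

lemma part_error_le: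
  fixes \<epsilon> \<delta> q n m :: real
  assumes "0 < \<delta>" "\<delta> \<le> 1" "\<delta>^4 = \<epsilon>" "0 \<le> q" "0 \<le> n" "\<delta> * n \<le> m"
  shows "\<epsilon> * q * n^2 + 3 * (\<epsilon>^2 / 4 * q * n^2) \<le> 2 * \<delta>^2 * q * m^2"
proof -
  have "\<delta>^2 * n^2 \<le> m^2"
    using power_mono[OF assms(6), of 2] assms by (simp add: power_mult_distrib)
  then have "\<delta>^4 * n^2 \<le> \<delta>^2 * m^2" "\<delta>^8 * n^2 \<le> \<delta>^2 * m^2"
    using error_powers_le[OF assms(1,2)] by simp_all
  moreover have "0 \<le> \<delta>^2 * m^2" by simp
  ultimately have "\<delta>^4 * n^2 + 3 / 4 * (\<delta>^8 * n^2) \<le> 2 * (\<delta>^2 * m^2)" by linarith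
  moreover have "\<epsilon>^2 = \<delta>^8" unfolding assms(3)[symmetric] by (simp flip: power_mult)
  ultimately have "\<epsilon> * n^2 + 3 / 4 * (\<epsilon>^2 * n^2) \<le> 2 * (\<delta>^2 * m^2)" using assms(3) by simp
  then have "q * (\<epsilon> * n^2 + 3 / 4 * (\<epsilon>^2 * n^2)) \<le> q * (2 * (\<delta>^2 * m^2))"
    using assms(4) by (rule mult_left_mono)
  then show ?thesis by (simp add: algebra_simps)
qed

lemma pair_error_less:
  fixes \<epsilon> \<delta> q n a b p s :: real
  assumes "0 < \<delta>" "\<delta> \<le> 1" "\<delta>^4 = \<epsilon>" "0 < q" "0 < n" "\<delta> * n \<le> a" "\<delta> * n \<le> b"
    and "s^2 = 2 * p - 1" "3 * \<delta> \<le> s"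
  shows "\<epsilon> * q * n^2 + 6 * (\<epsilon>^2 / 4 * q * n^2) < (p - 1 / 2) * q * a * b"
proof -
  have "0 < \<delta> * n" using assms by simp
  then have "0 \<le> a" using assms(6) by linarith
  then have "(\<delta> * n) * (\<delta> * n) \<le> a * b"
    using assms(6,7) \<open>0 < \<delta> * n\<close> by (intro mult_mono) auto
  then have "\<delta>^2 * n^2 \<le> a * b" by (simp add: power2_eq_square algebra_simps)
  then have "\<delta>^4 * n^2 \<le> \<delta>^2 * (a * b)" "\<delta>^8 * n^2 \<le> \<delta>^2 * (a * b)"
    using error_powers_le[OF assms(1,2)] by simp_all
  moreover have "0 \<le> \<delta>^2 * (a * b)"
    using \<open>\<delta>^2 * n^2 \<le> a * b\<close> by (metis dual_order.trans zero_le_mult_iff zero_le_power2)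
  ultimately have "\<delta>^4 * n^2 + 3 / 2 * (\<delta>^8 * n^2) \<le> 5 / 2 * (\<delta>^2 * (a * b))" by linarith
  moreover have "\<epsilon>^2 = \<delta>^8" unfolding assms(3)[symmetric] by (simp flip: power_mult)
  ultimately have "\<epsilon> * n^2 + 3 / 2 * (\<epsilon>^2 * n^2) \<le> 5 / 2 * (\<delta>^2 * (a * b))" using assms(3) by simp
  also have "\<dots> < s^2 / 2 * (a * b)"
  proof -
    have "(3 * \<delta>)^2 \<le> s^2" using assms by (intro power_mono) auto
    then have "9 * \<delta>^2 \<le> s^2" by (simp add: power_mult_distrib)
    moreover have "0 < \<delta>^2" using assms(1) by simp
    ultimately have "5 / 2 * \<delta>^2 < s^2 / 2" by linarith
    moreover have "0 < a * b" using \<open>0 < \<delta> * n\<close> assms by (smt (verit) mult_pos_pos)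
    ultimately show ?thesis using mult_strict_right_mono by (metis mult.assoc)
  qed
  finally have "q * (\<epsilon> * n^2 + 3 / 2 * (\<epsilon>^2 * n^2)) < q * (s^2 / 2 * (a * b))"
    using assms(4) by (rule mult_strict_left_mono)
  then show ?thesis using assms(8) by (simp add: algebra_simps)
qed

definition dense_tripartition :: "real \<Rightarrow> real \<Rightarrow> real \<Rightarrow> (nat \<Rightarrow> nat set) \<Rightarrow> nat \<Rightarrow> nat set set \<Rightarrow> bool" where
  "dense_tripartition p \<epsilon> q V n X \<longleftrightarrow>
     (\<forall>i\<in>{1,2,3}. real (e_ind X (V i)) \<ge> p * q * real (card (V i))^2 / 2 - \<epsilon> * q * real n^2) \<and>
     (\<forall>i\<in>{1,2,3}. \<forall>j\<in>{1,2,3}. i < j \<longrightarrow>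
        real (e_bip X (V i) (V j)) \<ge> p * q * real (card (V i)) * real (card (V j)) - \<epsilon> * q * real n^2)"

text \<open>Properties (P3)--(P5), where \<open>\<delta>\<close> stands for \<open>\<epsilon> powr (1/4)\<close>.\<close>

definition giant_components :: "real \<Rightarrow> real \<Rightarrow> (nat \<Rightarrow> nat set) \<Rightarrow> nat \<Rightarrow> nat set set \<Rightarrow> bool" where
  "giant_components \<theta> \<delta> V n X \<longleftrightarrow> (\<exists>Cs :: nat \<Rightarrow> nat set.
     (\<forall>i\<in>{1,2,3}. real (card (V i)) \<ge> \<delta> * real n \<longrightarrow>
        unique_largest_comp X (V i) (Cs i) \<and> real (card (Cs i)) \<ge> (\<theta> - \<delta>) * real (card (V i))) \<and>
     (\<forall>i\<in>{1,2,3}. \<forall>j\<in>{1,2,3}. i < j \<longrightarrow>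
        real (card (V i)) \<ge> \<delta> * real n \<longrightarrow> real (card (V j)) \<ge> \<delta> * real n \<longrightarrow>
        (\<exists>u\<in>Cs i. \<exists>w\<in>Cs j. reach (bip_edges X (V i) (V j)) (V i \<union> V j) u w)) \<and>
     (\<exists>C. unique_largest_comp X {..<n} C \<and> real (card C) \<ge> (\<theta> - 3 * \<delta>) * real n \<and>
        (\<forall>i\<in>{1,2,3}. real (card (V i)) \<ge> \<delta> * real n \<longrightarrow> Cs i \<subseteq> C)))"

lemma giant_componentsI:
  fixes \<theta> \<delta> :: real and Cs :: "nat \<Rightarrow> nat set"
  assumes "\<And>i. i \<in> {1, 2, 3} \<Longrightarrow> \<delta> * real n \<le> real (card (V i)) \<Longrightarrow>
      unique_largest_comp X (V i) (Cs i) \<and> (\<theta> - \<delta>) * real (card (V i)) \<le> real (card (Cs i))"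
    and "\<And>i j. i \<in> {1, 2, 3} \<Longrightarrow> j \<in> {1, 2, 3} \<Longrightarrow> i < j \<Longrightarrow>
      \<delta> * real n \<le> real (card (V i)) \<Longrightarrow> \<delta> * real n \<le> real (card (V j)) \<Longrightarrow>
      \<exists>u\<in>Cs i. \<exists>w\<in>Cs j. reach (bip_edges X (V i) (V j)) (V i \<union> V j) u w"
    and "unique_largest_comp X {..<n} C" "(\<theta> - 3 * \<delta>) * real n \<le> real (card C)"
    and "\<And>i. i \<in> {1, 2, 3} \<Longrightarrow> \<delta> * real n \<le> real (card (V i)) \<Longrightarrow> Cs i \<subseteq> C"
  shows "giant_components \<theta> \<delta> V n X"
  unfolding giant_components_def
  by (intro exI[of _ Cs] conjI ballI impI exI[of _ C]) (use assms in auto)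

lemma giant_component_in_big_part:
  fixes p q \<epsilon> \<delta> s :: real
  assumes XE: "X \<subseteq> E" and E: "E \<subseteq> edges_on {..<n}"
    and qr: "quasirandom_on E {..<n} q (\<epsilon>^2 / 4 * q * real n^2)"
    and U: "U \<subseteq> {..<n}" "\<delta> * real n \<le> real (card U)" and n: "0 < n"
    and dense: "p * q * real (card U)^2 / 2 - \<epsilon> * q * real n^2 \<le> real (e_ind X U)"
    and \<delta>: "0 < \<delta>" "\<delta> \<le> 1" "\<delta>^4 = \<epsilon>" and s: "s^2 = 2 * p - 1" "3 * \<delta> \<le> s" and q: "0 < q"
  shows "\<exists>v\<in>U. unique_largest_comp X U (comp X U v) \<and>
           ((1 + s) / 2 - \<delta>) * real (card U) \<le> real (card (comp X U v))"
proof (rule giant_component_of_dense[OF XE E quasirandom_on_subset[OF qr U(1)] _ _ dense _ s \<delta>(1) q])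
  show "finite U" using U(1) by (rule finite_subset) simp
  have "0 < \<delta> * real n" using \<delta> n by simp
  then show "U \<noteq> {}" using U(2) by auto
  show "\<epsilon> * q * real n^2 + 3 * (\<epsilon>^2 / 4 * q * real n^2) \<le> 2 * \<delta>^2 * q * real (card U)^2"
    using part_error_le[OF \<delta>] q U(2) by simp
qed

lemma path_between_big_parts:
  fixes p q \<epsilon> \<delta> s :: real
  assumes XE: "X \<subseteq> E" and E: "E \<subseteq> edges_on {..<n}"
    and qr: "quasirandom_on E {..<n} q (\<epsilon>^2 / 4 * q * real n^2)"
    and A: "A \<subseteq> {..<n}" "\<delta> * real n \<le> real (card A)" and B: "B \<subseteq> {..<n}" "\<delta> * real n \<le> real (card B)"
    and AB: "A \<inter> B = {}" and n: "0 < n"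
    and dense: "p * q * real (card A) * real (card B) - \<epsilon> * q * real n^2 \<le> real (e_bip X A B)"
    and \<delta>: "0 < \<delta>" "\<delta> \<le> 1" "\<delta>^4 = \<epsilon>" and s: "s^2 = 2 * p - 1" "3 * \<delta> \<le> s" and q: "0 < q"
    and CA: "CA \<subseteq> A" "card A \<le> 2 * card CA" and CB: "CB \<subseteq> B" "card B \<le> 2 * card CB"
  shows "\<exists>u\<in>CA. \<exists>w\<in>CB. reach (bip_edges X A B) (A \<union> B) u w"
proof (rule bip_path_between_majorities[OF XE E _ AB _ _ dense _ _ CA CB])
  show "quasirandom_on E (A \<union> B) q (\<epsilon>^2 / 4 * q * real n^2)"
    by (rule quasirandom_on_subset[OF qr]) (use A B in auto)
  show "finite A" "finite B" using A(1) B(1) by (auto intro: finite_subset)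
  show "\<epsilon> * q * real n^2 + 6 * (\<epsilon>^2 / 4 * q * real n^2) < (p - 1 / 2) * q * real (card A) * real (card B)"
    using pair_error_less[OF \<delta> q _ A(2) B(2) s] n by simp
qed (use q in simp)

lemma giant_components_of_dense_tripartition:
  fixes p q \<epsilon> \<delta> s :: real
  assumes E: "E \<subseteq> edges_on {..<n}" and qr: "quasirandom_on E {..<n} q (\<epsilon>^2 / 4 * q * real n^2)"
    and part: "tripartition V {..<n}" and n: "0 < n" and XE: "X \<subseteq> E"
    and dense: "dense_tripartition p \<epsilon> q V n X"
    and \<delta>: "0 < \<delta>" "\<delta>^4 = \<epsilon>" and s: "s^2 = 2 * p - 1" "s \<le> 1" "6 * \<delta> < s" and q: "0 < q"
  shows "giant_components ((1 + s) / 2) \<delta> V n X"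
proof -
  define big where "big i \<longleftrightarrow> \<delta> * real n \<le> real (card (V i))" for i
  have \<delta>1: "\<delta> \<le> 1" and \<delta>s: "3 * \<delta> \<le> s" using s(2,3) \<delta>(1) by linarith+
  have \<theta>: "1 / 2 \<le> (1 + s) / 2 - \<delta>" "(1 + s) / 2 - \<delta> \<le> 1" "1 / 2 < (1 + s) / 2 - 3 * \<delta>"
    using s(2,3) \<delta>(1) by (simp_all add: field_simps)
  have V: "V i \<subseteq> {..<n}" if "i \<in> {1, 2, 3}" for i using tripartition_subset[OF part that] .
  have "\<exists>v\<in>V i. unique_largest_comp X (V i) (comp X (V i) v) \<and>
          ((1 + s) / 2 - \<delta>) * real (card (V i)) \<le> real (card (comp X (V i) v))"
    if "i \<in> {1, 2, 3}" "big i" for i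
    using giant_component_in_big_part[OF XE E qr V _ n _ \<delta>(1) \<delta>1 \<delta>(2) s(1) \<delta>s q] dense that
    unfolding dense_tripartition_def big_def by auto
  then obtain v where v: "\<And>i. i \<in> {1, 2, 3} \<Longrightarrow> big i \<Longrightarrow> v i \<in> V i \<and>
      unique_largest_comp X (V i) (comp X (V i) (v i)) \<and>
      ((1 + s) / 2 - \<delta>) * real (card (V i)) \<le> real (card (comp X (V i) (v i)))"
    by metis
  have "card (V i) \<le> 2 * card (comp X (V i) (v i))" if "i \<in> {1, 2, 3}" "big i" for i
    using mult_right_mono[OF \<theta>(1), of "real (card (V i))"] v[OF that] by simp
  then have links: "\<exists>u\<in>comp X (V i) (v i). \<exists>w\<in>comp X (V j) (v j).
      reach (bip_edges X (V i) (V j)) (V i \<union> V j) u w"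
    if "i \<in> {1, 2, 3}" "j \<in> {1, 2, 3}" "i < j" "big i" "big j" for i j
    using path_between_big_parts[OF XE E qr V _ V _ _ n _ \<delta>(1) \<delta>1 \<delta>(2) s(1) \<delta>s q comp_subset _ comp_subset]
      tripartition_disjoint[OF part] dense that
    unfolding dense_tripartition_def big_def by auto
  have "\<exists>C. unique_largest_comp X {..<n} C \<and> ((1 + s) / 2 - 3 * \<delta>) * real n \<le> real (card C) \<and>
          (\<forall>i\<in>{1, 2, 3}. big i \<longrightarrow> comp X (V i) (v i) \<subseteq> C)"
    unfolding big_def
    by (rule giant_component_of_linked_parts[OF part n \<delta>(1) \<theta>(2,3)]) (use v links in \<open>auto simp: big_def\<close>)
  then obtain C where C: "unique_largest_comp X {..<n} C" "((1 + s) / 2 - 3 * \<delta>) * real n \<le> real (card C)"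
    "\<forall>i\<in>{1, 2, 3}. big i \<longrightarrow> comp X (V i) (v i) \<subseteq> C"
    by blast
  show ?thesis
    by (rule giant_componentsI[where Cs = "\<lambda>i. comp X (V i) (v i)" and C = C])
      (use v links C in \<open>auto simp: big_def\<close>)
qed

section \<open>Concentration under 1-independence\<close>

lemma finite_edges_on: "finite S \<Longrightarrow> finite (edges_on S)"
  unfolding edges_on_def by (rule finite_subset[of _ "Pow S"]) auto

lemma card_edges_meeting_le:
  assumes "finite S" "F \<subseteq> edges_on S" "e \<in> edges_on S"
  shows "card {f \<in> F. f \<inter> e \<noteq> {}} \<le> 2 * card S"
proof -
  obtain u w where e: "e = {u, w}" using assms(3) unfolding edges_on_def by auto
  have "{f \<in> F. f \<inter> e \<noteq> {}} \<subseteq> (\<lambda>z. {u, z}) ` S \<union> (\<lambda>z. {w, z}) ` S"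
  proof
    fix f assume f: "f \<in> {f \<in> F. f \<inter> e \<noteq> {}}"
    then obtain a b where "f = {a, b}" "a \<in> S" "b \<in> S" using assms(2) unfolding edges_on_def by blast
    then show "f \<in> (\<lambda>z. {u, z}) ` S \<union> (\<lambda>z. {w, z}) ` S" using f e by (auto simp: insert_commute)
  qed
  then have "card {f \<in> F. f \<inter> e \<noteq> {}} \<le> card ((\<lambda>z. {u, z}) ` S \<union> (\<lambda>z. {w, z}) ` S)"
    by (rule card_mono[rotated]) (use assms(1) in auto)
  also have "\<dots> \<le> card S + card S"
    by (rule order_trans[OF card_Un_le add_mono[OF card_image_le card_image_le]]) (use assms(1) in auto)
  finally show ?thesis by simp
qed

lemma one_indep_prob_both:
  assumes "one_indep E \<mu>" "e \<in> E" "f \<in> E" "e \<inter> f = {}"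
  shows "measure_pmf.prob \<mu> {X. e \<in> X \<and> f \<in> X}
           = measure_pmf.prob \<mu> {X. e \<in> X} * measure_pmf.prob \<mu> {X. f \<in> X}"
proof -
  have "{X. X \<inter> {e} \<in> {{e}} \<and> X \<inter> {f} \<in> {{f}}} = {X. e \<in> X \<and> f \<in> X}"
    "{X. X \<inter> {e} \<in> {{e}}} = {X. e \<in> X}" "{X. X \<inter> {f} \<in> {{f}}} = {X. f \<in> X}"
    by auto
  then show ?thesis
    using assms(1)[unfolded one_indep_def, rule_format, of "{e}" "{f}" "{{e}}" "{{f}}"] assms(2-4) by simp
qed

lemma edge_covariance_disjoint:
  assumes \<mu>: "\<mu> \<in> M1p E p" and E: "finite E" and ef: "e \<in> E" "f \<in> E" "e \<inter> f = {}"
  shows "measure_pmf.expectation \<mu> (\<lambda>X. (indicator X e - p) * (indicator X f - p)) = 0"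
proof -
  have "finite (set_pmf \<mu>)" using \<mu> E unfolding M1p_def by (auto intro: finite_subset[of _ "Pow E"])
  then have int: "integrable (measure_pmf \<mu>) g" for g :: "nat set set \<Rightarrow> real"
    by (rule integrable_measure_pmf_finite)
  have marg: "measure_pmf.prob \<mu> {X. e \<in> X} = p" "measure_pmf.prob \<mu> {X. f \<in> X} = p"
    using \<mu> ef unfolding M1p_def by auto
  have joint: "measure_pmf.prob \<mu> {X. e \<in> X \<and> f \<in> X} = p * p"
    using one_indep_prob_both[of E \<mu> e f] \<mu> ef marg unfolding M1p_def by simp
  have "(\<lambda>X. (indicator X e - p) * (indicator X f - p)) =
    (\<lambda>X. indicator {X. e \<in> X \<and> f \<in> X} X - p * indicator {X. e \<in> X} X - p * indicator {X. f \<in> X} X + p * p)"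
    by (auto simp: indicator_def algebra_simps)
  then show ?thesis using marg joint by (simp add: int measure_pmf.prob_space)
qed

lemma edge_count_second_moment:
  assumes \<mu>: "\<mu> \<in> M1p E p" and E: "finite E" "F \<subseteq> E" and p: "0 \<le> p" "p \<le> 1"
  shows "measure_pmf.expectation \<mu> (\<lambda>X. (real (card (F \<inter> X)) - p * real (card F))^2)
           \<le> (\<Sum>e\<in>F. real (card {f \<in> F. f \<inter> e \<noteq> {}}))"
proof -
  have "finite (set_pmf \<mu>)" using \<mu> E unfolding M1p_def by (auto intro: finite_subset[of _ "Pow E"])
  then have int: "integrable (measure_pmf \<mu>) g" for g :: "nat set set \<Rightarrow> real"
    by (rule integrable_measure_pmf_finite)
  have F: "finite F" using E by (rule finite_subset[rotated])
  define c where "c e f = measure_pmf.expectation \<mu> (\<lambda>X. (indicator X e - p) * (indicator X f - p))" for e f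
  have "real (card (F \<inter> X)) - p * real (card F) = (\<Sum>e\<in>F. indicator X e - p)" for X
    using sum.inter_restrict[OF F, of "\<lambda>_. 1::real" X] by (simp add: sum_subtractf indicator_def of_bool_def)
  then have "measure_pmf.expectation \<mu> (\<lambda>X. (real (card (F \<inter> X)) - p * real (card F))^2)
      = (\<Sum>e\<in>F. \<Sum>f\<in>F. c e f)"
    unfolding c_def power2_eq_square by (simp add: sum_product int)
  also have "\<dots> \<le> (\<Sum>e\<in>F. real (card {f \<in> F. f \<inter> e \<noteq> {}}))"
  proof (rule sum_mono)
    fix e assume e: "e \<in> F"
    have "(\<Sum>f\<in>F. c e f) = (\<Sum>f\<in>{f \<in> F. f \<inter> e \<noteq> {}}. c e f)"
      using edge_covariance_disjoint[OF \<mu> E(1)] e E(2) F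
      by (intro sum.mono_neutral_right) (auto simp: c_def Int_commute)
    also have "\<dots> \<le> (\<Sum>f\<in>{f \<in> F. f \<inter> e \<noteq> {}}. 1)"
    proof (rule sum_mono)
      fix f
      have "\<bar>(indicator X e - p) * (indicator X f - p)\<bar> \<le> (1::real)" for X
        using p by (auto simp: indicator_def abs_mult intro!: mult_le_one)
      then have "c e f \<le> measure_pmf.expectation \<mu> (\<lambda>X. 1)"
        unfolding c_def by (intro integral_mono[OF int int]) (simp add: abs_le_iff)
      then show "c e f \<le> 1" by (simp add: measure_pmf.prob_space)
    qed
    finally show "(\<Sum>f\<in>F. c e f) \<le> real (card {f \<in> F. f \<inter> e \<noteq> {}})" by simp
  qed
  finally show ?thesis .
qed

lemma edge_count_lower_tail:
  fixes K t :: real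
  assumes \<mu>: "\<mu> \<in> M1p E p" and E: "finite E" "F \<subseteq> E" and p: "0 \<le> p" "p \<le> 1"
    and K: "\<And>e. e \<in> F \<Longrightarrow> real (card {f \<in> F. f \<inter> e \<noteq> {}}) \<le> K" and t: "0 < t"
  shows "measure_pmf.prob \<mu> {X. real (card (F \<inter> X)) \<le> p * real (card F) - t} \<le> K * real (card F) / t^2"
proof -
  have "finite (set_pmf \<mu>)" using \<mu> E unfolding M1p_def by (auto intro: finite_subset[of _ "Pow E"])
  then have int: "integrable (measure_pmf \<mu>) g" for g :: "nat set set \<Rightarrow> real"
    by (rule integrable_measure_pmf_finite)
  let ?D = "\<lambda>X. real (card (F \<inter> X)) - p * real (card F)"
  have "measure_pmf.prob \<mu> {X. real (card (F \<inter> X)) \<le> p * real (card F) - t}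
      \<le> measure_pmf.prob \<mu> {X. t \<le> \<bar>?D X\<bar>}"
    by (rule measure_pmf.finite_measure_mono) auto
  also have "\<dots> \<le> measure_pmf.expectation \<mu> (\<lambda>X. (?D X)^2) / t^2"
    using measure_pmf.second_moment_method[of ?D \<mu> t] int t by simp
  also have "\<dots> \<le> (\<Sum>e\<in>F. K) / t^2"
  proof (rule divide_right_mono)
    have "(\<Sum>e\<in>F. real (card {f \<in> F. f \<inter> e \<noteq> {}})) \<le> (\<Sum>e\<in>F. K)" by (rule sum_mono) (rule K)
    then show "measure_pmf.expectation \<mu> (\<lambda>X. (?D X)^2) \<le> (\<Sum>e\<in>F. K)"
      using edge_count_second_moment[OF \<mu> E p] by linarith
  qed simp
  finally show ?thesis by (simp add: mult.commute)
qed

lemma prob_edge_count_deficit: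
  fixes p \<epsilon> q L :: real
  assumes \<mu>: "\<mu> \<in> M1p E p" and E: "E \<subseteq> edges_on {..<n}" and F: "F \<subseteq> E"
    and p: "0 \<le> p" "p \<le> 1" and \<epsilon>: "0 < \<epsilon>" "\<epsilon> \<le> 1" and q: "0 < q" and n: "0 < n"
    and upper: "real (card E) \<le> q * real n^2"
    and lower: "L - 3 * (\<epsilon>^2 / 4 * q * real n^2) \<le> real (card F)"
  shows "measure_pmf.prob \<mu> {X. real (card (F \<inter> X)) < p * L - \<epsilon> * q * real n^2} \<le> 32 / (\<epsilon>^2 * q * real n)"
proof -
  define N where "N = q * real n^2"
  define t where "t = \<epsilon> * N / 4"
  have N: "0 < N" using q n unfolding N_def by simp
  have t: "0 < t" using \<epsilon> N unfolding t_def by simp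
  have "p * (3 * (\<epsilon>^2 / 4 * N)) \<le> 1 * (3 / 4 * (\<epsilon> * N))"
  proof (rule mult_mono)
    have "\<epsilon>^2 \<le> \<epsilon>" using \<epsilon> by (simp add: power2_eq_square mult_le_cancel_left1)
    then show "3 * (\<epsilon>^2 / 4 * N) \<le> 3 / 4 * (\<epsilon> * N)" using N by simp
  qed (use p \<epsilon> N in auto)
  moreover have "p * L \<le> p * (real (card F) + 3 * (\<epsilon>^2 / 4 * N))"
    using lower p unfolding N_def by (intro mult_left_mono) (auto simp: algebra_simps)
  ultimately have threshold: "p * L - \<epsilon> * N \<le> p * real (card F) - t"
    unfolding t_def by (simp add: algebra_simps)
  have E_fin: "finite E" using E finite_edges_on[of "{..<n}"] by (auto intro: finite_subset)
  have "measure_pmf.prob \<mu> {X. real (card (F \<inter> X)) < p * L - \<epsilon> * N}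
      \<le> measure_pmf.prob \<mu> {X. real (card (F \<inter> X)) \<le> p * real (card F) - t}"
    using threshold by (intro measure_pmf.finite_measure_mono) auto
  also have "\<dots> \<le> 2 * real n * real (card F) / t^2"
  proof (rule edge_count_lower_tail[OF \<mu> E_fin F p _ t])
    fix e assume "e \<in> F"
    then show "real (card {f \<in> F. f \<inter> e \<noteq> {}}) \<le> 2 * real n"
      using card_edges_meeting_le[of "{..<n}" F e] F E by fastforce
  qed
  also have "\<dots> \<le> 2 * real n * N / t^2"
    using upper card_mono[OF E_fin F] unfolding N_def by (intro divide_right_mono mult_left_mono) auto
  also have "\<dots> = 32 / (\<epsilon>^2 * q * real n)"
    unfolding t_def N_def using \<epsilon> q n by (simp add: field_simps power2_eq_square)
  finally show ?thesis unfolding N_def by (simp add: mult.assoc)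
qed

lemma card_le_of_quasirandom:
  fixes \<epsilon> q :: real
  assumes E: "E \<subseteq> edges_on {..<n}" and qr: "quasirandom_on E {..<n} q (\<epsilon>^2 / 4 * q * real n^2)"
    and \<epsilon>: "\<bar>\<epsilon>\<bar> \<le> 1" and q: "0 \<le> q"
  shows "real (card E) \<le> q * real n^2"
proof -
  have "e_ind E {..<n} = card E"
    unfolding e_ind_def using E by (intro arg_cong[of _ _ card]) (auto simp: edges_on_def)
  then have "real (card E) \<le> q * real n^2 / 2 + \<epsilon>^2 / 4 * q * real n^2"
    using quasirandom_on_e_ind(1)[OF qr order_refl] by simp
  moreover have "\<epsilon>^2 / 4 \<le> 1 / 2" using \<epsilon> power_le_one[of "\<bar>\<epsilon>\<bar>" 2] by simp
  then have "\<epsilon>^2 / 4 * (q * real n^2) \<le> 1 / 2 * (q * real n^2)" using q by (intro mult_right_mono) auto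
  then have "\<epsilon>^2 / 4 * q * real n^2 \<le> 1 / 2 * (q * real n^2)" unfolding mult.assoc .
  ultimately show ?thesis by linarith
qed

lemma prob_sparse_part:
  fixes p \<epsilon> q :: real
  assumes \<mu>: "\<mu> \<in> M1p E p" and E: "E \<subseteq> edges_on {..<n}"
    and qr: "quasirandom_on E {..<n} q (\<epsilon>^2 / 4 * q * real n^2)" and U: "U \<subseteq> {..<n}"
    and p: "0 \<le> p" "p \<le> 1" and \<epsilon>: "0 < \<epsilon>" "\<epsilon> \<le> 1" and q: "0 < q" and n: "0 < n"
  shows "measure_pmf.prob \<mu> {X. real (e_ind X U) < p * q * real (card U)^2 / 2 - \<epsilon> * q * real n^2}
           \<le> 32 / (\<epsilon>^2 * q * real n)"
proof -
  define F where "F = {e \<in> E. e \<subseteq> U}"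
  have "measure_pmf.prob \<mu> {X. real (e_ind X U) < p * q * real (card U)^2 / 2 - \<epsilon> * q * real n^2}
      \<le> measure_pmf.prob \<mu> {X. real (card (F \<inter> X)) < p * (q * real (card U)^2 / 2) - \<epsilon> * q * real n^2}"
    using \<mu> e_ind_eq_card_Int[of _ E U] unfolding F_def M1p_def
    by (intro measure_pmf.finite_measure_mono_AE) (auto simp: AE_measure_pmf_iff mult.assoc)
  also have "\<dots> \<le> 32 / (\<epsilon>^2 * q * real n)"
  proof (rule prob_edge_count_deficit[OF \<mu> E _ p \<epsilon> q n card_le_of_quasirandom[OF E qr]])
    show "q * real (card U)^2 / 2 - 3 * (\<epsilon>^2 / 4 * q * real n^2) \<le> real (card F)"
      using quasirandom_on_e_ind(2)[OF qr U] quasirandom_on_nonneg[OF qr]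
      unfolding F_def e_ind_def by linarith
  qed (use \<epsilon> q in \<open>auto simp: F_def\<close>)
  finally show ?thesis .
qed

lemma prob_sparse_pair:
  fixes p \<epsilon> q :: real
  assumes \<mu>: "\<mu> \<in> M1p E p" and E: "E \<subseteq> edges_on {..<n}"
    and qr: "quasirandom_on E {..<n} q (\<epsilon>^2 / 4 * q * real n^2)"
    and AB: "A \<subseteq> {..<n}" "B \<subseteq> {..<n}" "A \<inter> B = {}"
    and p: "0 \<le> p" "p \<le> 1" and \<epsilon>: "0 < \<epsilon>" "\<epsilon> \<le> 1" and q: "0 < q" and n: "0 < n"
  shows "measure_pmf.prob \<mu> {X. real (e_bip X A B) < p * q * real (card A) * real (card B) - \<epsilon> * q * real n^2}
           \<le> 32 / (\<epsilon>^2 * q * real n)"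
proof -
  define F where "F = bip_edges E A B"
  have "measure_pmf.prob \<mu> {X. real (e_bip X A B) < p * q * real (card A) * real (card B) - \<epsilon> * q * real n^2}
      \<le> measure_pmf.prob \<mu>
          {X. real (card (F \<inter> X)) < p * (q * real (card A) * real (card B)) - \<epsilon> * q * real n^2}"
    using \<mu> e_bip_eq_card_Int[of _ E A B] unfolding F_def M1p_def
    by (intro measure_pmf.finite_measure_mono_AE) (auto simp: AE_measure_pmf_iff mult.assoc)
  also have "\<dots> \<le> 32 / (\<epsilon>^2 * q * real n)"
  proof (rule prob_edge_count_deficit[OF \<mu> E _ p \<epsilon> q n card_le_of_quasirandom[OF E qr]])
    show "F \<subseteq> E" unfolding F_def bip_edges_def by blast
    have "finite A" "finite B" using AB by (auto intro: finite_subset)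
    then show "q * real (card A) * real (card B) - 3 * (\<epsilon>^2 / 4 * q * real n^2) \<le> real (card F)"
      using quasirandom_on_e_bip[OF qr E AB] unfolding F_def e_bip_def abs_le_iff by linarith
  qed (use \<epsilon> q in auto)
  finally show ?thesis .
qed

lemma prob_dense_tripartition:
  fixes p \<epsilon> q :: real
  assumes \<mu>: "\<mu> \<in> M1p E p" and E: "E \<subseteq> edges_on {..<n}"
    and qr: "quasirandom_on E {..<n} q (\<epsilon>^2 / 4 * q * real n^2)" and part: "tripartition V {..<n}"
    and p: "0 \<le> p" "p \<le> 1" and \<epsilon>: "0 < \<epsilon>" "\<epsilon> \<le> 1" and q: "0 < q" and n: "0 < n"
  shows "1 - 192 / (\<epsilon>^2 * q * real n) \<le> measure_pmf.prob \<mu> {X. dense_tripartition p \<epsilon> q V n X}"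
proof -
  define c where "c = 32 / (\<epsilon>^2 * q * real n)"
  define B1 where "B1 i = {X. real (e_ind X (V i)) < p * q * real (card (V i))^2 / 2 - \<epsilon> * q * real n^2}"
    for i :: nat
  define B2 where "B2 ij = {X. real (e_bip X (V (fst ij)) (V (snd ij)))
      < p * q * real (card (V (fst ij))) * real (card (V (snd ij))) - \<epsilon> * q * real n^2}" for ij :: "nat \<times> nat"
  have B1: "measure_pmf.prob \<mu> (B1 i) \<le> c" if "i \<in> {1, 2, 3}" for i
    unfolding B1_def c_def
    by (rule prob_sparse_part[OF \<mu> E qr tripartition_subset[OF part that] p \<epsilon> q n])
  have "measure_pmf.prob \<mu> (B2 (i, j)) \<le> c" if "i \<in> {1, 2, 3}" "j \<in> {1, 2, 3}" "i \<noteq> j" for i j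
    unfolding B2_def c_def fst_conv snd_conv
    by (rule prob_sparse_pair[OF \<mu> E qr tripartition_subset[OF part that(1)]
          tripartition_subset[OF part that(2)] tripartition_disjoint[OF part that] p \<epsilon> q n])
  then have B2: "measure_pmf.prob \<mu> (B2 ij) \<le> c" if "ij \<in> {(1, 2), (1, 3), (2, 3)}" for ij
    using that by auto
  have "UNIV - {X. dense_tripartition p \<epsilon> q V n X}
      \<subseteq> (\<Union>i\<in>{1, 2, 3}. B1 i) \<union> (\<Union>ij\<in>{(1, 2), (1, 3), (2, 3)}. B2 ij)"
    unfolding dense_tripartition_def B1_def B2_def by (auto simp: not_le)
  then have "measure_pmf.prob \<mu> (UNIV - {X. dense_tripartition p \<epsilon> q V n X})
      \<le> measure_pmf.prob \<mu> ((\<Union>i\<in>{1, 2, 3}. B1 i) \<union> (\<Union>ij\<in>{(1, 2), (1, 3), (2, 3)}. B2 ij))"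
    by (rule measure_pmf.finite_measure_mono) simp
  also have "\<dots> \<le> measure_pmf.prob \<mu> (\<Union>i\<in>{1, 2, 3}. B1 i)
      + measure_pmf.prob \<mu> (\<Union>ij\<in>{(1, 2), (1, 3), (2, 3)}. B2 ij)"
    by (rule measure_Un_le) simp_all
  also have "\<dots> \<le> (\<Sum>i\<in>{1, 2, 3}. measure_pmf.prob \<mu> (B1 i))
      + (\<Sum>ij\<in>{(1, 2), (1, 3), (2, 3)}. measure_pmf.prob \<mu> (B2 ij))"
    by (intro add_mono measure_pmf.finite_measure_subadditive_finite) auto
  also have "\<dots> \<le> 3 * c + 3 * c"
    using sum_bounded_above[of "{1, 2, 3}" "\<lambda>i. measure_pmf.prob \<mu> (B1 i)" c, OF B1]
      sum_bounded_above[of "{(1, 2), (1, 3), (2, 3)}" "\<lambda>ij. measure_pmf.prob \<mu> (B2 ij)" c, OF B2]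
    by simp
  finally have "1 - measure_pmf.prob \<mu> {X. dense_tripartition p \<epsilon> q V n X} \<le> 6 * c"
    using measure_pmf.prob_compl[of "{X. dense_tripartition p \<epsilon> q V n X}" \<mu>] by simp
  moreover have "6 * c = 192 / (\<epsilon>^2 * q * real n)" unfolding c_def by simp
  ultimately show ?thesis by linarith
qed

lemma prob_dense_giant:
  fixes p \<epsilon> q \<delta> s :: real
  assumes \<mu>: "\<mu> \<in> M1p E p" and E: "E \<subseteq> edges_on {..<n}"
    and qr: "quasirandom_on E {..<n} q (\<epsilon>^2 / 4 * q * real n^2)" and part: "tripartition V {..<n}"
    and \<delta>: "0 < \<delta>" "\<delta>^4 = \<epsilon>" and s: "s^2 = 2 * p - 1" "s \<le> 1" "6 * \<delta> < s" and q: "0 < q" and n: "0 < n"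
  shows "1 - 192 / (\<epsilon>^2 * q * real n)
           \<le> measure_pmf.prob \<mu> {X. dense_tripartition p \<epsilon> q V n X \<and> giant_components ((1 + s) / 2) \<delta> V n X}"
proof -
  have "0 \<le> s" using s(3) \<delta>(1) by linarith
  then have "0 \<le> s^2" "s^2 \<le> 1" using power_le_one[of s 2] s(2) by auto
  then have p: "0 \<le> p" "p \<le> 1" using s(1) by linarith+
  have "\<delta> \<le> 1" using s(2,3) \<delta>(1) by linarith
  then have \<epsilon>: "0 < \<epsilon>" "\<epsilon> \<le> 1" using \<delta> power_le_one[of \<delta> 4] by auto
  have "measure_pmf.prob \<mu> {X. dense_tripartition p \<epsilon> q V n X}
      \<le> measure_pmf.prob \<mu> {X. dense_tripartition p \<epsilon> q V n X \<and> giant_components ((1 + s) / 2) \<delta> V n X}"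
    using \<mu> giant_components_of_dense_tripartition[OF E qr part n _ _ \<delta> s q] unfolding M1p_def
    by (intro measure_pmf.finite_measure_mono_AE) (auto simp: AE_measure_pmf_iff)
  then show ?thesis using prob_dense_tripartition[OF \<mu> E qr part p \<epsilon> q n] by linarith
qed

lemma eventually_ln_le_of_smallo:
  fixes q :: "nat \<Rightarrow> real"
  assumes q: "(\<lambda>n. ln (real n) / real n) \<in> o(q)" and q_nonneg: "\<And>n. 0 < n \<Longrightarrow> 0 \<le> q n"
  shows "eventually (\<lambda>n. 0 < n \<and> 0 < ln (real n) \<and> ln (real n) \<le> q n * real n) sequentially"
  using landau_o.smallD[OF q zero_less_one] eventually_ge_at_top[of 2]
proof eventually_elim
  case (elim n)
  then have "0 < ln (real n)" by simp
  moreover have "ln (real n) / real n \<le> q n" using elim q_nonneg[of n] by simp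
  ultimately show ?case using elim by (simp add: divide_le_eq)
qed

lemma tendsto_const_div_ln: "(\<lambda>n. c / ln (real n)) \<longlonglongrightarrow> 0"
  by (intro tendsto_divide_0[OF tendsto_const] filterlim_at_top_imp_at_infinity
      filterlim_compose[OF ln_at_top filterlim_real_sequentially])

lemma tendsto_prob_dense_giant:
  fixes p \<epsilon> :: real and q :: "nat \<Rightarrow> real"
  assumes p: "1 / 2 < p" "p \<le> 1" and \<epsilon>: "0 < \<epsilon>" "\<epsilon> < (sqrt (2 * p - 1) / 6)^4"
    and q: "(\<lambda>n. ln (real n) / real n) \<in> o(q)"
    and E: "\<And>n. E n \<subseteq> edges_on {..<n}"
    and qr: "\<And>n. quasirandom_on (E n) {..<n} (q n) (\<epsilon>^2 / 4 * q n * real n^2)"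
    and part: "\<And>n. tripartition (V n) {..<n}" and \<mu>: "\<And>n. \<mu> n \<in> M1p (E n) p"
  shows "(\<lambda>n. measure_pmf.prob (\<mu> n) {X. dense_tripartition p \<epsilon> (q n) (V n) n X \<and>
            giant_components ((1 + sqrt (2 * p - 1)) / 2) (\<epsilon> powr (1 / 4)) (V n) n X}) \<longlonglongrightarrow> 1"
proof -
  define s where "s = sqrt (2 * p - 1)"
  define \<delta> where "\<delta> = \<epsilon> powr (1 / 4)"
  have s: "s^2 = 2 * p - 1" "s \<le> 1" "0 < s" using p unfolding s_def by auto
  have \<delta>: "0 < \<delta>" "\<delta>^4 = \<epsilon>" using \<epsilon>(1) unfolding \<delta>_def by (simp_all flip: powr_realpow add: powr_powr)
  have "\<delta> < ((s / 6)^4) powr (1 / 4)"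
    unfolding \<delta>_def using \<epsilon> unfolding s_def by (intro powr_less_mono2) auto
  also have "\<dots> = s / 6" using s(3) by (simp flip: powr_numeral add: powr_powr)
  finally have \<delta>s: "6 * \<delta> < s" by simp
  have q_nonneg: "0 \<le> q n" if "0 < n" for n
    using quasirandom_on_nonneg[OF qr[of n]] \<epsilon>(1) that by (simp add: zero_le_mult_iff)
  have "eventually (\<lambda>n. 0 < n \<and> 0 < ln (real n) \<and> ln (real n) \<le> q n * real n) sequentially"
    by (rule eventually_ln_le_of_smallo[OF q]) (rule q_nonneg)
  then have lower: "eventually (\<lambda>n. 1 - 192 / \<epsilon>^2 / ln (real n) \<le> measure_pmf.prob (\<mu> n)
      {X. dense_tripartition p \<epsilon> (q n) (V n) n X \<and> giant_components ((1 + s) / 2) \<delta> (V n) n X}) sequentially"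
  proof eventually_elim
    case (elim n)
    then have n: "0 < n" and "0 < q n * real n" by linarith+
    then have qn: "0 < q n" by (simp add: zero_less_mult_iff)
    have "\<epsilon>^2 * ln (real n) \<le> \<epsilon>^2 * (q n * real n)" by (rule mult_left_mono) (use elim in auto)
    then have "192 / (\<epsilon>^2 * (q n * real n)) \<le> 192 / (\<epsilon>^2 * ln (real n))"
      by (rule divide_left_mono) (use elim \<epsilon>(1) qn in \<open>auto intro!: mult_pos_pos\<close>)
    then show ?case
      using prob_dense_giant[OF \<mu> E qr part \<delta> s(1,2) \<delta>s qn n] by (simp add: mult.assoc)
  qed
  have lim: "(\<lambda>n. 1 - 192 / \<epsilon>^2 / ln (real n)) \<longlonglongrightarrow> 1"
    using tendsto_diff[OF tendsto_const tendsto_const_div_ln[of "192 / \<epsilon>^2"], of 1] by simp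
  show ?thesis
    unfolding s_def[symmetric] \<delta>_def[symmetric]
    by (rule tendsto_sandwich[OF lower _ lim tendsto_const]) (simp add: measure_pmf.prob_le_1)
qed

theorem lemma23:
  fixes p :: real
  assumes "1/2 < p" and "p \<le> 1"
  shows "\<exists>\<epsilon>0>0. \<forall>\<epsilon>::real. 0 < \<epsilon> \<and> \<epsilon> < \<epsilon>0 \<longrightarrow>
    (\<forall>(q :: nat \<Rightarrow> real) (E :: nat \<Rightarrow> nat set set) (V :: nat \<Rightarrow> nat \<Rightarrow> nat set)
       (\<mu> :: nat \<Rightarrow> nat set set pmf).
      (\<lambda>n. ln (real n) / real n) \<in> o(q) \<longrightarrow>
      (\<forall>n. E n \<subseteq> edges_on {..<n} \<and>
           (\<forall>U \<subseteq> {..<n}. \<bar>real (e_ind (E n) U) - q n * real (card U)^2 / 2\<bar>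
                              \<le> \<epsilon>^2 / 4 * q n * real n^2)) \<longrightarrow>
      (\<forall>n. V n 1 \<union> V n 2 \<union> V n 3 = {..<n} \<and>
           V n 1 \<inter> V n 2 = {} \<and> V n 1 \<inter> V n 3 = {} \<and> V n 2 \<inter> V n 3 = {}) \<longrightarrow>
      (\<forall>n. \<mu> n \<in> M1p (E n) p) \<longrightarrow>
      ((\<lambda>n. measure_pmf.prob (\<mu> n) {X.
          let \<theta> = (1 + sqrt (2*p - 1)) / 2; big = (\<lambda>i. real (card (V n i)) \<ge> \<epsilon> powr (1/4) * real n) in
          \<comment> \<open>(P1)\<close>
          (\<forall>i\<in>{1,2,3}. real (e_ind X (V n i)) \<ge> p * q n * real (card (V n i))^2 / 2 - \<epsilon> * q n * real n^2) \<and>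
          \<comment> \<open>(P2)\<close>
          (\<forall>i\<in>{1,2,3}. \<forall>j\<in>{1,2,3}. i < j \<longrightarrow>
             real (e_bip X (V n i) (V n j)) \<ge> p * q n * real (card (V n i)) * real (card (V n j)) - \<epsilon> * q n * real n^2) \<and>
          (\<exists>Cs :: nat \<Rightarrow> nat set.
             \<comment> \<open>(P3)\<close>
             (\<forall>i\<in>{1,2,3}. big i \<longrightarrow>
                unique_largest_comp X (V n i) (Cs i) \<and>
                real (card (Cs i)) \<ge> (\<theta> - \<epsilon> powr (1/4)) * real (card (V n i))) \<and>
             \<comment> \<open>(P4)\<close>
             (\<forall>i\<in>{1,2,3}. \<forall>j\<in>{1,2,3}. i < j \<longrightarrow> big i \<longrightarrow> big j \<longrightarrow>
                (\<exists>u\<in>Cs i. \<exists>w\<in>Cs j. reach (bip_edges X (V n i) (V n j)) (V n i \<union> V n j) u w)) \<and>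
             \<comment> \<open>(P5)\<close>
             (\<exists>C. unique_largest_comp X {..<n} C \<and>
                  real (card C) \<ge> (\<theta> - 3 * \<epsilon> powr (1/4)) * real n \<and>
                  (\<forall>i\<in>{1,2,3}. big i \<longrightarrow> Cs i \<subseteq> C)))})
        \<longlonglongrightarrow> 1))"
  apply (intro exI[of _ "(sqrt (2 * p - 1) / 6)^4"] conjI allI impI)
  \<comment> \<open>this choice makes \<open>\<delta> = \<epsilon> powr (1/4)\<close> satisfy \<open>6 * \<delta> < sqrt (2 * p - 1)\<close>\<close>
  subgoal using assms by simp
  subgoal for \<epsilon> q E V \<mu>
    using tendsto_prob_dense_giant[of p \<epsilon> q E V \<mu>] assms
    by (simp add: Let_def dense_tripartition_def giant_components_def quasirandom_on_def tripartition_def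
        conj_assoc)
  done

end
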